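(* Let $A$ be a bounded operator on a Hilbert space $H$, let $X$ be a bounded subset of $\mathbb{C}$ such that $X^{-}$ contains the spectrum of $A$, and let $\kappa>0$. The following are equivalent: (i) $\kappa$ is a spectral constant for $A$ on $X$; (ii) $\kappa$ is a spectral constant for $A$ on every smoothly bounded open neighbourhood $\Omega$ of the spectrum of $A$ for which $\Omega^{-}$ contains $X$. If $X$ is convex, then (i) and (ii) are also equivalent to: (iii) $\kappa$ is a spectral constant for $A$ on every convex smoothly bounded open neighbourhood $\Omega$ of the spectrum of $A$ for which $\Omega^{-}$ contains $X$.
   Context: For a bounded set $Y\subseteq\mathbb{C}$ whose closure contains the spectrum of $A$, a positive number $\kappa$ is a spectral constant for $A$ on $Y$ if $\|f(A)\|\le\kappa\sup_{z\in Y}|f(z)|$ for every rational function $f\colon Y^{-}\to\mathbb{C}$ with poles off $Y^{-}$. An open subset $\Omega$ of $\mathbb{C}$ is smoothly bounded if it is bounded and $\partial\Omega$ is an embedded smooth submanifold of $\mathbb{C}$. *)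

theory Defs
  imports "HOL-Analysis.Analysis" "HOL-Computational_Algebra.Polynomial"
begin

class complex_inner = real_normed_vector +
  fixes scaleC :: "complex \<Rightarrow> 'a \<Rightarrow> 'a" (infixr \<open>*\<^sub>C\<close> 75)
  fixes cinner :: "'a \<Rightarrow> 'a \<Rightarrow> complex"
  assumes scaleC_add_right: "a *\<^sub>C (x + y) = a *\<^sub>C x + a *\<^sub>C y"
    and scaleC_add_left: "(a + b) *\<^sub>C x = a *\<^sub>C x + b *\<^sub>C x"
    and scaleC_scaleC: "a *\<^sub>C (b *\<^sub>C x) = (a * b) *\<^sub>C x"
    and scaleC_one: "1 *\<^sub>C x = x"
    and scaleR_scaleC: "scaleR r x = complex_of_real r *\<^sub>C x"
    and cinner_add_left: "cinner (x + y) z = cinner x z + cinner y z"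
    and cinner_scaleC_left: "cinner (a *\<^sub>C x) y = cnj a * cinner x y"
    and cinner_commute: "cinner x y = cnj (cinner y x)"
    and cinner_norm: "cinner x x = complex_of_real ((norm x)\<^sup>2)"

class chilbert_space = complex_inner + complete_space

definition bounded_op :: "('a::complex_inner \<Rightarrow> 'a) \<Rightarrow> bool" where
  "bounded_op A \<longleftrightarrow> bounded_linear A \<and> (\<forall>c x. A (c *\<^sub>C x) = c *\<^sub>C A x)"

definition op_spectrum :: "('a::complex_inner \<Rightarrow> 'a) \<Rightarrow> complex set" where
  "op_spectrum A = {l. \<not> (\<exists>B. bounded_op B \<and> (\<forall>x. B (A x - l *\<^sub>C x) = x)
                                    \<and> (\<forall>x. A (B x) - l *\<^sub>C B x = x))}"

definition op_poly :: "complex poly \<Rightarrow> ('a::complex_inner \<Rightarrow> 'a) \<Rightarrow> 'a \<Rightarrow> 'a" where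
  "op_poly p A = (\<lambda>x. \<Sum>i\<le>degree p. coeff p i *\<^sub>C ((A ^^ i) x))"

definition op_rat :: "complex poly \<Rightarrow> complex poly \<Rightarrow> ('a::complex_inner \<Rightarrow> 'a) \<Rightarrow> 'a \<Rightarrow> 'a" where
  "op_rat p q A = op_poly p A \<circ> inv (op_poly q A)"

text \<open>Spectral constant: rational functions with poles off the closure of \<open>Y\<close>
  are represented as quotients \<open>p/q\<close> with \<open>q \<noteq> 0\<close> having no zero on \<open>closure Y\<close>.\<close>
definition spectral_constant :: "('a::complex_inner \<Rightarrow> 'a) \<Rightarrow> complex set \<Rightarrow> real \<Rightarrow> bool" where
  "spectral_constant A Y \<kappa> \<longleftrightarrow> \<kappa> > 0 \<and>
     (\<forall>p q. q \<noteq> 0 \<and> (\<forall>z\<in>closure Y. poly q z \<noteq> 0) \<longrightarrow>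
        onorm (op_rat p q A) \<le> \<kappa> * (SUP z\<in>Y. norm (poly p z / poly q z)))"

text \<open>Iterated directional (real) derivatives of a map \<open>\<complex> \<rightarrow> \<complex>\<close> viewed as \<open>\<real>\<^sup>2 \<rightarrow> \<real>\<^sup>2\<close>.\<close>
fun iter_pd :: "complex list \<Rightarrow> (complex \<Rightarrow> complex) \<Rightarrow> complex \<Rightarrow> complex" where
  "iter_pd [] f = f"
| "iter_pd (v # vs) f = (\<lambda>z. vector_derivative (\<lambda>t::real. iter_pd vs f (z + complex_of_real t * v)) (at 0))"

definition smooth_on :: "complex set \<Rightarrow> (complex \<Rightarrow> complex) \<Rightarrow> bool" where
  "smooth_on U f \<longleftrightarrow> open U \<and>
     (\<forall>vs. set vs \<subseteq> {1, \<i>} \<longrightarrow> continuous_on U (iter_pd vs f) \<and>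
        (\<forall>v\<in>{1, \<i>}. \<forall>z\<in>U. (\<lambda>t::real. iter_pd vs f (z + complex_of_real t * v)) differentiable (at 0)))"

text \<open>Embedded smooth submanifold of \<open>\<complex> = \<real>\<^sup>2\<close> (of any dimension): locally straightened by a
  diffeomorphism onto a (real) linear subspace.\<close>
definition embedded_smooth_submanifold :: "complex set \<Rightarrow> bool" where
  "embedded_smooth_submanifold M \<longleftrightarrow>
     (\<forall>p\<in>M. \<exists>U \<phi> L. open U \<and> p \<in> U \<and> inj_on \<phi> U \<and> open (\<phi> ` U) \<and>
        smooth_on U \<phi> \<and> smooth_on (\<phi> ` U) (the_inv_into U \<phi>) \<and>
        subspace L \<and> \<phi> ` (U \<inter> M) = \<phi> ` U \<inter> L)"

definition smoothly_bounded :: "complex set \<Rightarrow> bool" where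
  "smoothly_bounded \<Omega> \<longleftrightarrow> open \<Omega> \<and> bounded \<Omega> \<and> embedded_smooth_submanifold (frontier \<Omega>)"

end

theory Submission
  imports Defs "HOL-Complex_Analysis.Complex_Analysis"
    "HOL-Computational_Algebra.Fundamental_Theorem_Algebra"
begin

text \<open>
  (i) implies (ii) and (iii) because the supremum over \<open>X\<close> of a function continuous on
  \<open>\<Omega>\<^sup>-\<close> is at most its supremum over \<open>\<Omega>\<close>.

  For the converse fix \<open>f = p/q\<close> with \<open>q\<close> zero-free on \<open>X\<^sup>-\<close>. Perturb \<open>p\<close> to
  \<open>P = p + \<delta> r\<close> with \<open>deg r\<close> large, so that \<open>P\<close> and \<open>q\<close> have no common zero and
  \<open>|P/q| \<rightarrow> \<infinity>\<close> at infinity. Then the lemniscate \<open>{|P| < M |q|}\<close> is a bounded neighbourhood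
  of \<open>X\<^sup>-\<close> for \<open>M\<close> slightly above \<open>sup\<^sub>X |P/q|\<close>, and it is smoothly bounded as soon as \<open>M\<close>
  avoids the finitely many critical values of \<open>|P/q|\<close>: near its boundary, \<open>Ln\<close> of a
  normalisation of \<open>P/q\<close> is a chart flattening the boundary onto a line. Letting \<open>\<delta> \<rightarrow> 0\<close> gives
  (i). For convex \<open>X\<close>, take a Riemann map \<open>\<phi>\<close> of a convex neighbourhood of \<open>X\<^sup>-\<close> on which
  \<open>|f| < sup\<^sub>X |f| + \<epsilon>\<close>. The sublevel sets \<open>{|\<phi>| < r}\<close> are convex by Study's theorem
  (a consequence of Schwarz's lemma) and smoothly bounded by the same chart argument.
\<close>

section \<open>Rational functional calculus\<close>

lemma scaleC_zero_right [simp]: "a *\<^sub>C (0::'a::complex_inner) = 0"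
proof -
  have "a *\<^sub>C (0::'a) = a *\<^sub>C 0 + a *\<^sub>C 0" by (metis add_0 scaleC_add_right)
  then show ?thesis by simp
qed

lemma scaleC_zero_left [simp]: "0 *\<^sub>C (x::'a::complex_inner) = 0"
proof -
  have "0 *\<^sub>C x = 0 *\<^sub>C x + 0 *\<^sub>C x" by (metis add_0 scaleC_add_left)
  then show ?thesis by simp
qed

lemma scaleC_minus_left: "(- a) *\<^sub>C (x::'a::complex_inner) = - (a *\<^sub>C x)"
proof -
  have "a *\<^sub>C x + (- a) *\<^sub>C x = 0" by (metis scaleC_add_left add.right_inverse scaleC_zero_left)
  then show ?thesis by (simp add: eq_neg_iff_add_eq_0 add.commute)
qed

lemma scaleC_sum_right: "a *\<^sub>C (\<Sum>i\<in>I. f i) = (\<Sum>i\<in>I. a *\<^sub>C (f i :: 'a::complex_inner))"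
  by (induction I rule: infinite_finite_induct) (auto simp: scaleC_add_right)

lemma norm_scaleC: "norm (a *\<^sub>C (x::'a::complex_inner)) = cmod a * norm x"
proof -
  have "cinner (a *\<^sub>C x) (a *\<^sub>C x) = cnj a * cnj (cnj a * cinner x x)"
    by (metis cinner_scaleC_left cinner_commute)
  then have "complex_of_real ((norm (a *\<^sub>C x))\<^sup>2) = cnj a * a * complex_of_real ((norm x)\<^sup>2)"
    by (simp add: cinner_norm mult.assoc)
  also have "cnj a * a = complex_of_real ((cmod a)\<^sup>2)" by (metis complex_norm_square mult.commute)
  finally have "(norm (a *\<^sub>C x))\<^sup>2 = (cmod a * norm x)\<^sup>2"
    by (metis of_real_eq_iff of_real_mult power_mult_distrib)
  then show ?thesis by (simp add: power2_eq_iff_nonneg)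
qed

lemma bounded_op_add: "bounded_op A \<Longrightarrow> A (x + y) = A x + A y"
  unfolding bounded_op_def using linear_add bounded_linear.linear by blast

lemma bounded_op_zero: "bounded_op A \<Longrightarrow> A 0 = 0"
  unfolding bounded_op_def using linear_0 bounded_linear.linear by blast

lemma bounded_op_scaleC: "bounded_op A \<Longrightarrow> A (c *\<^sub>C x) = c *\<^sub>C A x"
  unfolding bounded_op_def by blast

lemma bounded_op_sum: "bounded_op A \<Longrightarrow> A (\<Sum>i\<in>I. f i) = (\<Sum>i\<in>I. A (f i))"
  by (induction I rule: infinite_finite_induct) (auto simp: bounded_op_add bounded_op_zero)

lemma bounded_op_const_zero: "bounded_op (\<lambda>x. 0)"
  by (simp add: bounded_op_def)

lemma bounded_op_scaleC_id: "bounded_op (\<lambda>x::'a::complex_inner. c *\<^sub>C x)"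
  unfolding bounded_op_def
proof (intro conjI allI)
  show "bounded_linear (\<lambda>x::'a. c *\<^sub>C x)"
  proof (rule bounded_linear_intro[where K="cmod c"])
    fix x y :: 'a and r :: real
    show "c *\<^sub>C (x + y) = c *\<^sub>C x + c *\<^sub>C y" by (rule scaleC_add_right)
    show "c *\<^sub>C (r *\<^sub>R x) = r *\<^sub>R (c *\<^sub>C x)"
      by (simp add: scaleR_scaleC scaleC_scaleC mult.commute)
    show "norm (c *\<^sub>C x) \<le> norm x * cmod c" by (simp add: norm_scaleC mult.commute)
  qed
  fix d and x :: 'a
  show "c *\<^sub>C (d *\<^sub>C x) = d *\<^sub>C (c *\<^sub>C x)" by (simp add: scaleC_scaleC mult.commute)
qed

lemma bounded_op_plus: "bounded_op F \<Longrightarrow> bounded_op G \<Longrightarrow> bounded_op (\<lambda>x. F x + G x)"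
  unfolding bounded_op_def by (auto intro: bounded_linear_add simp: scaleC_add_right)

lemma bounded_op_compose: "bounded_op F \<Longrightarrow> bounded_op G \<Longrightarrow> bounded_op (\<lambda>x. F (G x))"
  unfolding bounded_op_def using bounded_linear_compose[of F G] by auto

lemma op_poly_eq_sum_upto:
  assumes "degree p \<le> n"
  shows "op_poly p A x = (\<Sum>i\<le>n. coeff p i *\<^sub>C (A ^^ i) x)"
  unfolding op_poly_def
  by (rule sum.mono_neutral_left) (use assms in \<open>auto simp: coeff_eq_0\<close>)

lemma op_poly_0 [simp]: "op_poly 0 A x = 0"
  by (simp add: op_poly_def)

lemma op_poly_const [simp]: "op_poly [:c:] A x = c *\<^sub>C x"
  by (simp add: op_poly_def)

lemma op_poly_1 [simp]: "op_poly 1 A x = x"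
  by (simp add: op_poly_def scaleC_one)

lemma op_poly_add: "op_poly (p + r) A x = op_poly p A x + op_poly r A x"
proof -
  let ?n = "max (degree p) (degree r)"
  have "op_poly (p + r) A x = (\<Sum>i\<le>?n. coeff (p + r) i *\<^sub>C (A ^^ i) x)"
    by (rule op_poly_eq_sum_upto) (simp add: degree_add_le)
  also have "\<dots> = (\<Sum>i\<le>?n. coeff p i *\<^sub>C (A ^^ i) x) + (\<Sum>i\<le>?n. coeff r i *\<^sub>C (A ^^ i) x)"
    by (simp add: scaleC_add_left sum.distrib)
  also have "\<dots> = op_poly p A x + op_poly r A x"
    using op_poly_eq_sum_upto[of p ?n] op_poly_eq_sum_upto[of r ?n] by (metis max.cobounded1 max.cobounded2)
  finally show ?thesis .
qed

lemma op_poly_smult: "op_poly (smult c p) A x = c *\<^sub>C op_poly p A x"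
proof -
  have "op_poly (smult c p) A x = (\<Sum>i\<le>degree p. coeff (smult c p) i *\<^sub>C (A ^^ i) x)"
    by (rule op_poly_eq_sum_upto) (simp add: degree_smult_le)
  also have "\<dots> = c *\<^sub>C op_poly p A x"
    by (simp add: op_poly_def scaleC_sum_right scaleC_scaleC)
  finally show ?thesis .
qed

lemma op_poly_pCons:
  assumes A: "bounded_op A"
  shows "op_poly (pCons a p) A x = a *\<^sub>C x + A (op_poly p A x)"
proof -
  have "op_poly (pCons a p) A x = (\<Sum>i\<le>Suc (degree p). coeff (pCons a p) i *\<^sub>C (A ^^ i) x)"
    by (rule op_poly_eq_sum_upto) (simp add: degree_pCons_le)
  also have "\<dots> = a *\<^sub>C x + (\<Sum>i\<le>degree p. coeff p i *\<^sub>C (A ^^ Suc i) x)"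
    by (subst sum.atMost_Suc_shift) simp
  also have "(\<Sum>i\<le>degree p. coeff p i *\<^sub>C (A ^^ Suc i) x) = A (op_poly p A x)"
    by (simp add: op_poly_def bounded_op_sum[OF A] bounded_op_scaleC[OF A])
  finally show ?thesis .
qed

lemma op_poly_mult:
  assumes A: "bounded_op A"
  shows "op_poly (p * r) A x = op_poly p A (op_poly r A x)"
proof (induction p arbitrary: x rule: pCons_induct)
  case (pCons a p)
  have "op_poly (pCons a p * r) A x = a *\<^sub>C op_poly r A x + A (op_poly (p * r) A x)"
    by (simp add: op_poly_add op_poly_smult op_poly_pCons[OF A])
  also have "\<dots> = op_poly (pCons a p) A (op_poly r A x)"
    by (simp add: op_poly_pCons[OF A] pCons.IH)
  finally show ?case .
qed simp

lemma bounded_op_op_poly: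
  assumes A: "bounded_op A"
  shows "bounded_op (op_poly p A)"
proof (induction p rule: pCons_induct)
  case 0
  then show ?case using bounded_op_const_zero by (simp add: fun_eq_iff)
next
  case (pCons a p)
  have "op_poly (pCons a p) A = (\<lambda>x. a *\<^sub>C x + A (op_poly p A x))"
    by (simp add: fun_eq_iff op_poly_pCons[OF A])
  then show ?case
    using bounded_op_plus[OF bounded_op_scaleC_id bounded_op_compose[OF A pCons.IH]] by simp
qed

lemma op_poly_linear_factor:
  assumes A: "bounded_op A"
  shows "op_poly [:-a, 1:] A x = A x - a *\<^sub>C x"
  by (simp add: op_poly_pCons[OF A] scaleC_minus_left scaleC_one bounded_op_zero[OF A])

text \<open>Split off one linear factor \<open>z - a\<close> of \<open>q\<close> at a time; \<open>A - a I\<close> is invertible since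
  \<open>a \<notin> \<sigma>(A)\<close>.\<close>
lemma op_poly_invertible:
  fixes A :: "'a::complex_inner \<Rightarrow> 'a"
  assumes A: "bounded_op A" and "q \<noteq> 0" and "\<forall>z. poly q z = 0 \<longrightarrow> z \<notin> op_spectrum A"
  shows "\<exists>B. bounded_op B \<and> (\<forall>x. B (op_poly q A x) = x) \<and> (\<forall>x. op_poly q A (B x) = x)"
  using assms(2,3)
proof (induction "degree q" arbitrary: q rule: less_induct)
  case less
  show ?case
  proof (cases "degree q = 0")
    case True
    then obtain c where c: "q = [:c:]" by (metis degree_eq_zeroE)
    with less have "c \<noteq> 0" by simp
    then show ?thesis
      by (intro exI[of _ "\<lambda>x. inverse c *\<^sub>C x"])
         (simp add: c bounded_op_scaleC_id scaleC_scaleC scaleC_one)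
  next
    case False
    then obtain a where a: "poly q a = 0"
      using fundamental_theorem_of_algebra constant_degree by metis
    then obtain q' where q': "q = [:-a, 1:] * q'" using poly_eq_0_iff_dvd by (metis dvdE)
    have "q' \<noteq> 0" using less.prems q' by auto
    then have "degree q = degree [:-a, 1:] + degree q'" unfolding q' by (intro degree_mult_eq) auto
    then have "degree q = Suc (degree q')" by simp
    moreover have "\<forall>z. poly q' z = 0 \<longrightarrow> z \<notin> op_spectrum A" using less.prems(2) q' by simp
    ultimately obtain B' where B': "bounded_op B'" "\<forall>x. B' (op_poly q' A x) = x"
      "\<forall>x. op_poly q' A (B' x) = x"
      using less.hyps[of q'] \<open>q' \<noteq> 0\<close> by auto
    have "a \<notin> op_spectrum A" using a less.prems(2) by blast
    then obtain Ba where Ba: "bounded_op Ba" "\<forall>x. Ba (A x - a *\<^sub>C x) = x"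
      "\<forall>x. A (Ba x) - a *\<^sub>C Ba x = x"
      unfolding op_spectrum_def by blast
    have qA: "op_poly q A x = A (op_poly q' A x) - a *\<^sub>C op_poly q' A x" for x
      unfolding q' op_poly_mult[OF A] op_poly_linear_factor[OF A] ..
    show ?thesis
      by (intro exI[of _ "\<lambda>x. B' (Ba x)"]) (simp add: bounded_op_compose B' Ba qA)
  qed
qed

lemma bounded_op_op_rat:
  fixes A :: "'a::complex_inner \<Rightarrow> 'a"
  assumes A: "bounded_op A" and "q \<noteq> 0" and "\<forall>z. poly q z = 0 \<longrightarrow> z \<notin> op_spectrum A"
  shows "bounded_op (op_rat p q A)"
proof -
  obtain B where B: "bounded_op B" "\<forall>x. B (op_poly q A x) = x" "\<forall>x. op_poly q A (B x) = x"
    using op_poly_invertible[OF assms] by blast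
  have "inv (op_poly q A) = B" by (rule inv_equality) (use B in auto)
  then have "op_rat p q A = (\<lambda>x. op_poly p A (B x))" by (simp add: op_rat_def o_def)
  then show ?thesis using bounded_op_compose[OF bounded_op_op_poly[OF A] B(1)] by simp
qed

lemma op_rat_add: "op_rat (p + r) q A x = op_rat p q A x + op_rat r q A x"
  by (simp add: op_rat_def op_poly_add)

lemma op_rat_smult: "op_rat (smult c p) q A x = c *\<^sub>C op_rat p q A x"
  by (simp add: op_rat_def op_poly_smult)

lemma op_rat_const: "op_rat [:c:] 1 A x = c *\<^sub>C x"
proof -
  have "op_poly 1 A = id" by (simp add: fun_eq_iff)
  then show ?thesis by (simp add: op_rat_def)
qed

section \<open>Smooth charts for level sets of the modulus of holomorphic maps\<close>

lemma has_vector_derivative_along_line: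
  assumes "g holomorphic_on U" "open U" "z \<in> U" "\<forall>w\<in>U. h w = c * g w"
  shows "((\<lambda>t::real. h (z + of_real t * v)) has_vector_derivative (c * deriv g z * v)) (at 0)"
proof -
  have "(g has_field_derivative deriv g z) (at (z + of_real 0 * v))"
    using assms holomorphic_derivI by simp
  moreover have "((\<lambda>t::real. z + of_real t * v) has_vector_derivative v) (at 0)"
    by (auto intro!: derivative_eq_intros)
  ultimately have "((\<lambda>t::real. g (z + of_real t * v)) has_vector_derivative (v * deriv g z)) (at 0)"
    using field_vector_diff_chain_at[of "\<lambda>t::real. z + of_real t * v" v 0 g] by (simp add: o_def)
  then have D: "((\<lambda>t::real. c * g (z + of_real t * v)) has_vector_derivative (c * deriv g z * v)) (at 0)"
    using has_vector_derivative_mult_right by (fastforce simp: mult_ac)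
  have "open ((\<lambda>t::real. z + of_real t * v) -` U)"
    by (rule open_vimage[OF \<open>open U\<close>]) (intro continuous_intros)
  then show ?thesis
    by (rule has_vector_derivative_transform_within_open[OF D]) (use assms in auto)
qed

lemma iter_pd_holomorphic:
  assumes "f holomorphic_on U" "open U" "z \<in> U"
  shows "iter_pd vs f z = prod_list vs * (deriv ^^ length vs) f z"
  using assms(3)
proof (induction vs arbitrary: z)
  case (Cons v vs)
  have "((\<lambda>t::real. iter_pd vs f (z + of_real t * v)) has_vector_derivative
          (prod_list vs * deriv ((deriv ^^ length vs) f) z * v)) (at 0)"
    using assms Cons by (intro has_vector_derivative_along_line holomorphic_higher_deriv) auto
  then show ?case by (simp add: vector_derivative_at mult_ac)
qed simp

lemma smooth_on_holomorphic:
  assumes "f holomorphic_on U" "open U"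
  shows "smooth_on U f"
  unfolding smooth_on_def
proof (intro conjI allI impI ballI)
  fix vs :: "complex list"
  have "continuous_on U (\<lambda>z. prod_list vs * (deriv ^^ length vs) f z)"
    using assms holomorphic_higher_deriv holomorphic_on_imp_continuous_on
    by (intro continuous_intros) blast
  then show "continuous_on U (iter_pd vs f)"
    by (rule continuous_on_cong[THEN iffD1, rotated 2]) (use iter_pd_holomorphic[OF assms] in auto)
  fix v z assume "z \<in> U"
  then show "(\<lambda>t::real. iter_pd vs f (z + of_real t * v)) differentiable (at 0)"
    using has_vector_derivative_along_line[OF holomorphic_higher_deriv[OF assms] assms(2)]
      iter_pd_holomorphic[OF assms] differentiableI_vector by blast
qed (use assms in simp)

text \<open>The chart is \<open>\<phi> = Ln (k / k p)\<close>: it flattens \<open>|k| = |k p|\<close> onto the imaginary axis.\<close>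
lemma modulus_level_chart:
  assumes "open U" "k holomorphic_on U" "inj_on k U" "\<forall>z\<in>U. k z / k p \<in> ball 1 1"
  shows "\<exists>\<phi>. inj_on \<phi> U \<and> open (\<phi> ` U) \<and> smooth_on U \<phi> \<and> smooth_on (\<phi> ` U) (the_inv_into U \<phi>)
           \<and> \<phi> ` {z\<in>U. cmod (k z) = cmod (k p)} = \<phi> ` U \<inter> {w. Re w = 0}"
proof -
  define \<phi> where "\<phi> = (\<lambda>z. Ln (k z / k p))"
  have "1 \<le> dist 1 (complex_of_real r)" if "r \<le> 0" for r
    using complex_Re_le_cmod[of "1 - complex_of_real r"] that by (simp add: dist_norm)
  then have ball_nonpos: "ball (1::complex) 1 \<inter> \<real>\<^sub>\<le>\<^sub>0 = {}"
    by (fastforce elim!: nonpos_Reals_cases)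
  have nz: "k z \<noteq> 0 \<and> k p \<noteq> 0" if "z \<in> U" for z
  proof -
    have "dist 1 (k z / k p) < 1" using assms(4) that by simp
    then show ?thesis by (auto simp: dist_norm)
  qed
  have hol: "\<phi> holomorphic_on U"
    unfolding \<phi>_def
  proof (rule holomorphic_on_compose_gen[where g=Ln and t="ball 1 1", unfolded o_def])
    show "(\<lambda>z. k z / k p) holomorphic_on U" using assms(2) nz by (intro holomorphic_intros) auto
    show "Ln holomorphic_on ball 1 1" using ball_nonpos by (intro holomorphic_on_Ln)
  qed (use assms(4) in auto)
  have inj: "inj_on \<phi> U"
  proof (rule inj_onI)
    fix x y assume "x \<in> U" "y \<in> U" "\<phi> x = \<phi> y"
    then have "exp (\<phi> x) = exp (\<phi> y)" by simp
    then have "k x = k y" unfolding \<phi>_def using nz \<open>x \<in> U\<close> \<open>y \<in> U\<close> by simp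
    then show "x = y" using assms(3) \<open>x \<in> U\<close> \<open>y \<in> U\<close> by (meson inj_onD)
  qed
  have "open (\<phi> ` U)" by (rule open_mapping_thm3[OF hol assms(1) inj])
  moreover have "the_inv_into U \<phi> holomorphic_on (\<phi> ` U)"
  proof -
    obtain g where g: "g holomorphic_on (\<phi> ` U)" "\<And>z. z \<in> U \<Longrightarrow> g (\<phi> z) = z"
      using holomorphic_has_inverse[OF hol assms(1) inj] by metis
    show ?thesis
      by (rule holomorphic_transform[OF g(1)]) (use g(2) inj the_inv_into_f_f in force)
  qed
  moreover have "z \<in> U \<Longrightarrow> cmod (k z) = cmod (k p) \<longleftrightarrow> Re (\<phi> z) = 0" for z
    using nz by (auto simp: \<phi>_def Re_Ln norm_divide)
  ultimately show ?thesis
    using inj hol assms(1) by (intro exI[of _ \<phi>]) (auto simp: smooth_on_holomorphic)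
qed

lemma embedded_smooth_submanifold_modulus_level:
  assumes "open U" "f holomorphic_on U" "c > 0" "\<forall>z\<in>U. cmod (f z) = c \<longrightarrow> deriv f z \<noteq> 0"
  shows "embedded_smooth_submanifold {z\<in>U. cmod (f z) = c}"
  unfolding embedded_smooth_submanifold_def
proof
  fix p assume p: "p \<in> {z\<in>U. cmod (f z) = c}"
  obtain r where r: "r > 0" "ball p r \<subseteq> U" "inj_on f (ball p r)"
    using has_complex_derivative_locally_injective[OF assms(2) _ assms(1)] assms(4) p by blast
  have "continuous (at p) f"
    using assms(1,2) p holomorphic_on_imp_continuous_on continuous_on_eq_continuous_at by blast
  then obtain s where s: "s > 0" "\<forall>y. dist y p < s \<longrightarrow> dist (f y) (f p) < c"
    unfolding continuous_at_eps_delta using assms(3) by blast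
  define V where "V = ball p (min r s)"
  have "V \<subseteq> ball p r" by (auto simp: V_def)
  then have "f holomorphic_on V" "inj_on f V"
    using r holomorphic_on_subset[OF assms(2)] inj_on_subset by auto
  moreover have "f z / f p \<in> ball 1 1" if "z \<in> V" for z
  proof -
    have "dist z p < s" using that by (simp add: V_def dist_commute)
    then have "cmod (f z - f p) < cmod (f p)" using s p by (simp add: dist_norm)
    moreover have fp: "f p \<noteq> 0" using p assms(3) by auto
    then have "1 - f z / f p = (f p - f z) / f p" by (simp add: field_simps)
    then have "dist 1 (f z / f p) = cmod (f z - f p) / cmod (f p)"
      by (simp add: dist_norm norm_divide norm_minus_commute)
    ultimately show ?thesis using fp by (simp add: divide_less_eq)
  qed
  ultimately obtain \<phi> where \<phi>: "inj_on \<phi> V" "open (\<phi> ` V)" "smooth_on V \<phi>"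
    "smooth_on (\<phi> ` V) (the_inv_into V \<phi>)"
    "\<phi> ` {z\<in>V. cmod (f z) = cmod (f p)} = \<phi> ` V \<inter> {w. Re w = 0}"
    using modulus_level_chart[of V f p] by (auto simp: V_def)
  have "V \<inter> {z\<in>U. cmod (f z) = c} = {z\<in>V. cmod (f z) = cmod (f p)}"
    using r p by (auto simp: V_def)
  moreover have "subspace {w::complex. Re w = 0}" by (auto simp: subspace_def)
  moreover have "open V" "p \<in> V" using r s by (auto simp: V_def)
  ultimately show "\<exists>V \<phi> L. open V \<and> p \<in> V \<and> inj_on \<phi> V \<and> open (\<phi> ` V) \<and> smooth_on V \<phi> \<and>
      smooth_on (\<phi> ` V) (the_inv_into V \<phi>) \<and> subspace L \<and>
      \<phi> ` (V \<inter> {z\<in>U. cmod (f z) = c}) = \<phi> ` V \<inter> L"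
    using \<phi> by (intro exI[of _ V] exI[of _ \<phi>] exI[of _ "{w. Re w = 0}"]) simp
qed

text \<open>At a regular point the open mapping theorem lets \<open>f\<close> take the values \<open>(1 - t) f z\<close>,
  \<open>t > 0\<close> small, at points arbitrarily close to \<open>z\<close>.\<close>
lemma regular_point_in_closure_modulus_sublevel:
  assumes "open U" "f holomorphic_on U" "z \<in> U" "f z \<noteq> 0" "deriv f z \<noteq> 0"
  shows "z \<in> closure {w\<in>U. cmod (f w) < cmod (f z)}"
  unfolding closure_approachable
proof (intro allI impI)
  fix e :: real assume "e > 0"
  have "f holomorphic_on (ball z e \<inter> U)" "open (ball z e \<inter> U)" "z \<in> ball z e \<inter> U"
    using assms \<open>e > 0\<close> holomorphic_on_subset by auto
  then obtain r where r: "r > 0" "ball z r \<subseteq> ball z e \<inter> U" "open (f ` ball z r)"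
    using has_complex_derivative_locally_invertible assms(5) by metis
  then obtain d where d: "d > 0" "ball (f z) d \<subseteq> f ` ball z r"
    using openE[of "f ` ball z r" "f z"] by auto
  define t where "t = min (1/2) (d / (2 * cmod (f z)))"
  have t: "0 < t" "t < 1" "t * cmod (f z) < d"
    using d assms(4) by (auto simp: t_def min_def field_simps)
  have "dist (f z) ((1 - of_real t) * f z) < d"
    using t by (simp add: dist_norm algebra_simps norm_mult)
  then have "(1 - of_real t) * f z \<in> f ` ball z r" using d(2) by auto
  then obtain y where y: "y \<in> ball z r" "f y = (1 - of_real t) * f z"
    by (metis imageE)
  have "cmod (1 - complex_of_real t) = 1 - t"
    using t by (metis abs_of_pos diff_gt_0_iff_gt norm_of_real of_real_1 of_real_diff)
  then have "cmod (f y) < cmod (f z)"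
    using t assms(4) by (simp add: y(2) norm_mult)
  then show "\<exists>w\<in>{w\<in>U. cmod (f w) < cmod (f z)}. dist w z < e"
    using y(1) r(2) by (intro bexI[of _ y]) (auto simp: dist_commute subset_iff)
qed

lemma smoothly_bounded_modulus_sublevel:
  assumes "open U" "f holomorphic_on U" "c > 0"
    and "bounded {z\<in>U. cmod (f z) < c}" "closure {z\<in>U. cmod (f z) < c} \<subseteq> U"
    and "\<forall>z\<in>U. cmod (f z) = c \<longrightarrow> deriv f z \<noteq> 0"
  shows "smoothly_bounded {z\<in>U. cmod (f z) < c}"
proof -
  define \<Omega> where "\<Omega> = {z\<in>U. cmod (f z) < c}"
  have cont: "continuous_on U f" using assms(2) holomorphic_on_imp_continuous_on by blast
  have "\<Omega> = U \<inter> (\<lambda>z. cmod (f z)) -` {..<c}" by (auto simp: \<Omega>_def)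
  then have "open \<Omega>"
    using continuous_open_preimage[OF continuous_on_norm[OF cont] assms(1)] by simp
  have "cmod (f z) \<le> c" if "z \<in> closure \<Omega>" for z
  proof -
    have "continuous_on (closure \<Omega>) (\<lambda>z. cmod (f z))"
      using assms(5) by (intro continuous_on_norm continuous_on_subset[OF cont]) (simp add: \<Omega>_def)
    then have "(\<lambda>z. cmod (f z)) ` closure \<Omega> \<subseteq> {..c}"
      by (rule image_closure_subset) (auto simp: \<Omega>_def)
    then show ?thesis using that by auto
  qed
  moreover have "z \<in> closure \<Omega>" if "z \<in> U" "cmod (f z) = c" for z
    using regular_point_in_closure_modulus_sublevel[OF assms(1,2)] that assms(3,6)
    by (fastforce simp: \<Omega>_def)
  ultimately have "frontier \<Omega> = {z\<in>U. cmod (f z) = c}"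
    using assms(5) \<open>open \<Omega>\<close> by (fastforce simp: frontier_def interior_open \<Omega>_def)
  then show ?thesis
    using embedded_smooth_submanifold_modulus_level[OF assms(1,2,3,6)] assms(4) \<open>open \<Omega>\<close>
    by (simp add: smoothly_bounded_def \<Omega>_def)
qed

section \<open>Smoothly bounded lemniscates\<close>

lemma Ioo_avoiding_finite:
  fixes S :: "real set"
  assumes "finite S" "a < b"
  obtains M where "a < M" "M < b" "M \<notin> S"
proof -
  have "\<not> {a<..<b} \<subseteq> S" using finite_subset[of "{a<..<b}" S] infinite_Ioo[OF assms(2)] assms(1) by auto
  then obtain M where "M \<in> {a<..<b}" "M \<notin> S" by blast
  then show ?thesis using that by auto
qed

lemma poly_norm_dominates_at_infinity:
  fixes P Q :: "complex poly"
  assumes "degree Q < degree P"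
  obtains R where "\<And>z. R \<le> cmod z \<Longrightarrow> M * cmod (poly Q z) < cmod (poly P z)"
proof -
  define m where "m = \<bar>M\<bar> + 1"
  have m: "m > 0" using abs_ge_zero[of M] unfolding m_def by linarith
  have "((\<lambda>z. poly Q z / poly P z) \<longlongrightarrow> 0) at_infinity"
    by (rule poly_divide_tendsto_0_at_infinity[OF assms])
  from tendstoD[OF this, of "1 / m"]
  have "\<forall>\<^sub>F z in at_infinity. cmod (poly Q z / poly P z) < 1 / m"
    using m by (simp add: dist_norm)
  moreover have "\<forall>\<^sub>F z in at_infinity. poly P z \<noteq> 0"
    using filterlim_poly_at_infinity[of P] assms filterlim_at_infinity_imp_eventually_ne by auto
  ultimately have "\<forall>\<^sub>F z in at_infinity. M * cmod (poly Q z) < cmod (poly P z)"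
  proof eventually_elim
    case (elim z)
    then have "cmod (poly Q z) * m < cmod (poly P z)"
      using m by (simp add: norm_divide field_simps)
    moreover have "M * cmod (poly Q z) \<le> cmod (poly Q z) * m"
      using mult_right_mono[of M m "cmod (poly Q z)"] by (simp add: m_def mult.commute)
    ultimately show ?case by linarith
  qed
  then show ?thesis using that unfolding eventually_at_infinity by blast
qed

lemma bounded_lemniscate:
  fixes P Q :: "complex poly"
  assumes "degree Q < degree P"
  shows "bounded {z. cmod (poly P z) < M * cmod (poly Q z)}"
proof -
  obtain R where R: "\<And>z. R \<le> cmod z \<Longrightarrow> M * cmod (poly Q z) < cmod (poly P z)"
    using poly_norm_dominates_at_infinity[OF assms] by blast
  have "cmod z \<le> R" if "cmod (poly P z) < M * cmod (poly Q z)" for z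
  proof (rule ccontr)
    assume "\<not> cmod z \<le> R"
    then have "M * cmod (poly Q z) < cmod (poly P z)" using R by simp
    then show False using that by simp
  qed
  then have "{z. cmod (poly P z) < M * cmod (poly Q z)} \<subseteq> cball 0 R" by auto
  then show ?thesis using bounded_cball bounded_subset by blast
qed

text \<open>If the numerator of \<open>(P/Q)'\<close> vanished, \<open>P/Q\<close> would be constant on the connected set
  where \<open>Q \<noteq> 0\<close>, forcing \<open>P = c Q\<close>.\<close>
lemma quotient_derivative_numerator_nonzero:
  fixes P Q :: "complex poly"
  assumes "Q \<noteq> 0" "degree Q < degree P"
  shows "pderiv P * Q - P * pderiv Q \<noteq> 0"
proof
  assume D: "pderiv P * Q - P * pderiv Q = 0"
  define Z where "Z = - {z. poly Q z = 0}"
  have fin: "finite {z. poly Q z = 0}" using poly_roots_finite[OF assms(1)] .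
  then have "open Z" "connected Z"
    using connected_open_delete_finite[OF open_UNIV connected_UNIV _ fin]
    by (auto simp: Z_def Compl_eq_Diff_UNIV intro: finite_imp_closed)
  moreover have "poly (pderiv P) z * poly Q z - poly P z * poly (pderiv Q) z = 0" for z
    using D by (metis poly_0 poly_diff poly_mult)
  then have "\<forall>z\<in>Z - {}. ((\<lambda>z. poly P z / poly Q z) has_field_derivative 0) (at z)"
    using DERIV_divide[OF poly_DERIV[of P] poly_DERIV[of Q]] by (simp add: Z_def)
  moreover have "continuous_on Z (\<lambda>z. poly P z / poly Q z)"
    by (intro continuous_intros) (auto simp: Z_def)
  ultimately obtain c where c: "\<And>z. z \<in> Z \<Longrightarrow> poly P z / poly Q z = c"
    using DERIV_zero_connected_constant[of Z "{}" "\<lambda>z. poly P z / poly Q z"] by auto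
  have roots: "Z \<subseteq> {z. poly (P - smult c Q) z = 0}"
    using c by (auto simp: Z_def field_simps)
  have "infinite Z" using fin by (simp add: Z_def Compl_eq_Diff_UNIV infinite_UNIV_char_0)
  then have "P - smult c Q = 0" using finite_subset[OF roots poly_roots_finite] by blast
  then show False using assms(2) degree_smult_le[of c Q] by simp
qed

text \<open>Choosing the level \<open>M\<close> off the finitely many critical values of \<open>|P/Q|\<close> makes the
  boundary of the lemniscate smooth.\<close>
lemma lemniscate_smoothly_bounded:
  fixes P Q :: "complex poly"
  assumes coprime: "\<forall>z. poly Q z = 0 \<longrightarrow> poly P z \<noteq> 0" and "Q \<noteq> 0" "degree Q < degree P"
    and "0 \<le> a" "a < b"
  obtains M where "a < M" "M < b" "smoothly_bounded {z. cmod (poly P z) < M * cmod (poly Q z)}"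
    "closure {z. cmod (poly P z) < M * cmod (poly Q z)} \<subseteq> {z. poly Q z \<noteq> 0}"
proof -
  define F where "F = (\<lambda>z. poly P z / poly Q z)"
  define Z where "Z = {z. poly Q z \<noteq> 0}"
  define D where "D = pderiv P * Q - P * pderiv Q"
  have "open Z" unfolding Z_def by (intro open_Collect_neq continuous_intros)
  have dF: "(F has_field_derivative poly D z / (poly Q z)\<^sup>2) (at z)" if "z \<in> Z" for z
    using DERIV_divide[OF poly_DERIV[of P z] poly_DERIV[of Q z]] that
    by (simp add: F_def D_def Z_def power2_eq_square)
  then have hol: "F holomorphic_on Z" using \<open>open Z\<close> holomorphic_on_open by blast
  have crit: "{z\<in>Z. deriv F z = 0} \<subseteq> {z. poly D z = 0}"
  proof clarify
    fix z assume "z \<in> Z" "deriv F z = 0"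
    then have "poly D z / (poly Q z)\<^sup>2 = 0" using DERIV_imp_deriv[OF dF[OF \<open>z \<in> Z\<close>]] by simp
    then show "poly D z = 0" using \<open>z \<in> Z\<close> by (simp add: Z_def)
  qed
  have "D \<noteq> 0" unfolding D_def using quotient_derivative_numerator_nonzero assms(2,3) .
  then have "finite {z\<in>Z. deriv F z = 0}" by (rule finite_subset[OF crit poly_roots_finite])
  then obtain M where M: "a < M" "M < b" "M \<notin> (\<lambda>z. cmod (F z)) ` {z\<in>Z. deriv F z = 0}"
    by (rule Ioo_avoiding_finite[OF finite_imageI \<open>a < b\<close>])
  have "cmod (poly P z) < M * cmod (poly Q z) \<longleftrightarrow> z \<in> Z \<and> cmod (F z) < M" for z
    by (cases "poly Q z = 0") (auto simp: F_def Z_def norm_divide pos_divide_less_eq)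
  then have \<Omega>: "{z. cmod (poly P z) < M * cmod (poly Q z)} = {z\<in>Z. cmod (F z) < M}" by blast
  have "closure {z. cmod (poly P z) < M * cmod (poly Q z)} \<subseteq> {z. cmod (poly P z) \<le> M * cmod (poly Q z)}"
    by (rule closure_minimal) (auto intro!: closed_Collect_le continuous_intros)
  also have "\<dots> \<subseteq> Z"
  proof
    fix z assume "z \<in> {z. cmod (poly P z) \<le> M * cmod (poly Q z)}"
    then show "z \<in> Z" using coprime[rule_format, of z] by (auto simp: Z_def)
  qed
  finally have closure_in_Z: "closure {z\<in>Z. cmod (F z) < M} \<subseteq> Z" by (simp only: \<Omega>)
  have "smoothly_bounded {z\<in>Z. cmod (F z) < M}"
  proof (rule smoothly_bounded_modulus_sublevel[OF \<open>open Z\<close> hol _ _ closure_in_Z])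
    show "M > 0" using M(1) assms(4) by linarith
    show "bounded {z\<in>Z. cmod (F z) < M}" unfolding \<Omega>[symmetric] by (rule bounded_lemniscate[OF assms(3)])
    show "\<forall>z\<in>Z. cmod (F z) = M \<longrightarrow> deriv F z \<noteq> 0"
    proof (intro ballI impI notI)
      fix z assume "z \<in> Z" "cmod (F z) = M" "deriv F z = 0"
      then show False using M(3) imageI[of z _ "\<lambda>z. cmod (F z)"] by simp
    qed
  qed
  then show ?thesis using closure_in_Z by (intro that[OF M(1,2)]) (simp_all only: \<Omega> Z_def)
qed

section \<open>Convex smoothly bounded neighbourhoods\<close>

lemma convex_open_thickening:
  fixes K :: "'a::euclidean_space set"
  assumes "compact K" "convex K" "K \<noteq> {}" "open W" "K \<subseteq> W"
  obtains V where "convex V" "open V" "bounded V" "K \<subseteq> V" "V \<subseteq> W"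
proof -
  obtain e where e: "e > 0" "{x. infdist x K \<le> e} \<subseteq> W"
    using compact_in_open_separated[OF assms(3,1,4,5)] by blast
  have V: "K + ball 0 e = (\<Union>x\<in>K. \<Union>y\<in>ball 0 e. {x + y})" by (auto simp: set_plus_def)
  have "convex (K + ball 0 e)" using assms(2) by (intro convex_set_plus convex_ball)
  moreover have "open (K + ball 0 e)" unfolding V by (intro open_sums) simp
  moreover have "bounded (K + ball 0 e)"
    unfolding V using assms(1) by (intro bounded_sums compact_imp_bounded bounded_ball)
  moreover have "K \<subseteq> K + ball 0 e" using e(1) set_plus_intro[of _ K 0 "ball 0 e"] by force
  moreover have "K + ball 0 e \<subseteq> W"
  proof
    fix z assume "z \<in> K + ball 0 e"
    then obtain x y where "x \<in> K" "norm y < e" "z = x + y" by (auto simp: set_plus_def)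
    then have "infdist z K \<le> e" using infdist_le[of x K z] by (simp add: dist_norm)
    then show "z \<in> W" using e(2) by blast
  qed
  ultimately show ?thesis using that by blast
qed

text \<open>Study's argument: \<open>F(w) = f((1 - u) g(c w) + u g(w))\<close> with \<open>c = f a / f b\<close> maps the
  disc into itself and fixes \<open>0\<close>, so Schwarz's lemma at \<open>w = f b\<close> gives the bound.\<close>
lemma Riemann_map_convex_combination_le:
  fixes f g :: "complex \<Rightarrow> complex"
  assumes "convex V" "f holomorphic_on V" "g holomorphic_on ball 0 1"
    and f: "\<forall>z\<in>V. f z \<in> ball 0 1 \<and> g (f z) = z" and g: "\<forall>z\<in>ball 0 1. g z \<in> V \<and> f (g z) = z"
    and "a \<in> V" "b \<in> V" "cmod (f a) \<le> cmod (f b)" "0 \<le> u" "u \<le> 1"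
  shows "cmod (f ((1 - u) *\<^sub>R a + u *\<^sub>R b)) \<le> cmod (f b)"
proof (cases "f b = 0")
  case True
  then have "f a = 0" using assms(8) by simp
  moreover have "a = g (f a)" "b = g (f b)" using f assms(6,7) by auto
  ultimately have "a = b" using True by simp
  then show ?thesis by (simp add: scaleR_left_diff_distrib)
next
  case False
  define c where "c = f a / f b"
  define F where "F = (\<lambda>w. f ((1 - u) *\<^sub>R g (c * w) + u *\<^sub>R g w))"
  have "cmod c \<le> 1" using assms(8) False by (simp add: c_def norm_divide divide_le_eq_1)
  then have c_disc: "c * w \<in> ball 0 1" if "w \<in> ball 0 1" for w
    using that mult_left_le_one_le[of "cmod w" "cmod c"] by (auto simp: norm_mult)
  have inV: "(1 - u) *\<^sub>R g (c * w) + u *\<^sub>R g w \<in> V" if "w \<in> ball 0 1" for w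
    using assms(1,9,10) g c_disc[OF that] that by (simp add: convex_alt)
  have "(\<lambda>w. g (c * w)) holomorphic_on ball 0 1"
    using c_disc by (intro holomorphic_on_compose_gen[OF _ assms(3), unfolded o_def] holomorphic_intros) auto
  then have "F holomorphic_on ball 0 1"
    unfolding F_def scaleR_conv_of_real using inV assms(3)
    by (intro holomorphic_on_compose_gen[OF _ assms(2), unfolded o_def] holomorphic_intros)
      (auto simp: scaleR_conv_of_real)
  moreover have "F 0 = 0"
    using g by (simp add: F_def scaleR_left_diff_distrib)
  moreover have "cmod (F w) < 1" if "cmod w < 1" for w
    using f inV[of w] that by (simp add: F_def)
  moreover have "cmod (f b) < 1" using f assms(7) by simp
  ultimately have "cmod (F (f b)) \<le> cmod (f b)" using Schwarz_Lemma(1) by blast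
  moreover have "F (f b) = f ((1 - u) *\<^sub>R a + u *\<^sub>R b)"
    using False f assms(6,7) by (simp add: F_def c_def)
  ultimately show ?thesis by simp
qed

lemma Riemann_map_sublevel_convex:
  fixes f g :: "complex \<Rightarrow> complex"
  assumes "convex V" "f holomorphic_on V" "g holomorphic_on ball 0 1"
    and "\<forall>z\<in>V. f z \<in> ball 0 1 \<and> g (f z) = z" "\<forall>z\<in>ball 0 1. g z \<in> V \<and> f (g z) = z"
  shows "convex {z\<in>V. cmod (f z) < r}"
proof -
  have *: "(1 - u) *\<^sub>R a + u *\<^sub>R b \<in> {z\<in>V. cmod (f z) < r}"
    if "a \<in> V" "b \<in> V" "cmod (f a) \<le> cmod (f b)" "cmod (f b) < r" "0 \<le> u" "u \<le> 1" for a b u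
    using Riemann_map_convex_combination_le[OF assms that(1-3,5,6)] assms(1) that
    by (simp add: convex_alt)
  show ?thesis
    unfolding convex_alt
  proof (intro ballI allI impI)
    fix a b and u :: real
    assume "a \<in> {z\<in>V. cmod (f z) < r}" "b \<in> {z\<in>V. cmod (f z) < r}" "0 \<le> u \<and> u \<le> 1"
    then show "(1 - u) *\<^sub>R a + u *\<^sub>R b \<in> {z\<in>V. cmod (f z) < r}"
      using *[of a b u] *[of b a "1 - u"] by (cases "cmod (f a) \<le> cmod (f b)") (auto simp: add.commute)
  qed
qed

lemma closure_Riemann_map_sublevel_subset:
  fixes f g :: "complex \<Rightarrow> complex"
  assumes "continuous_on (ball 0 1) g" "\<forall>z\<in>V. g (f z) = z" "\<forall>z\<in>ball 0 1. g z \<in> V" "r < 1"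
  shows "closure {z\<in>V. cmod (f z) < r} \<subseteq> V"
proof -
  have "continuous_on (cball 0 r) g"
    using assms(4) by (intro continuous_on_subset[OF assms(1)]) auto
  then have "compact (g ` cball 0 r)" by (intro compact_continuous_image) auto
  moreover have "{z\<in>V. cmod (f z) < r} \<subseteq> g ` cball 0 r"
  proof
    fix z assume "z \<in> {z\<in>V. cmod (f z) < r}"
    then have "z = g (f z)" "f z \<in> cball 0 r" using assms(2) by auto
    then show "z \<in> g ` cball 0 r" by (rule image_eqI)
  qed
  ultimately have "closure {z\<in>V. cmod (f z) < r} \<subseteq> g ` cball 0 r"
    by (intro closure_minimal compact_imp_closed)
  also have "\<dots> \<subseteq> V" using assms(3,4) by auto
  finally show ?thesis .
qed

lemma convex_smoothly_bounded_neighbourhood: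
  fixes K :: "complex set"
  assumes "compact K" "convex K" "K \<noteq> {}" "open W" "K \<subseteq> W"
  obtains \<Omega> where "convex \<Omega>" "smoothly_bounded \<Omega>" "K \<subseteq> \<Omega>" "closure \<Omega> \<subseteq> W"
proof -
  obtain V where V: "convex V" "open V" "bounded V" "K \<subseteq> V" "V \<subseteq> W"
    using convex_open_thickening[OF assms] by blast
  have "V \<noteq> {}" "V \<noteq> UNIV" using V assms(3) not_bounded_UNIV by auto
  moreover have "open V \<and> simply_connected V" using V(1,2) convex_imp_simply_connected by blast
  ultimately obtain f g where f: "f holomorphic_on V" "\<forall>z\<in>V. f z \<in> ball 0 1 \<and> g (f z) = z"
    and g: "g holomorphic_on ball 0 1" "\<forall>z\<in>ball 0 1. g z \<in> V \<and> f (g z) = z"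
    using Riemann_mapping_theorem[of V] by blast
  have "continuous_on K (\<lambda>z. cmod (f z))"
    using holomorphic_on_subset[OF f(1) V(4)] by (intro continuous_on_norm holomorphic_on_imp_continuous_on)
  then obtain m where m: "m \<in> K" "\<forall>z\<in>K. cmod (f z) \<le> cmod (f m)"
    using continuous_attains_sup[OF assms(1,3)] by blast
  have "cmod (f m) < 1" using f(2) m(1) V(4) by auto
  then obtain r where r: "cmod (f m) < r" "r < 1" using dense by blast
  then have "r > 0" using norm_ge_zero[of "f m"] by linarith
  define \<Omega> where "\<Omega> = {z\<in>V. cmod (f z) < r}"
  have "closure \<Omega> \<subseteq> V"
    unfolding \<Omega>_def using holomorphic_on_imp_continuous_on[OF g(1)] f(2) g(2) r(2)
    by (intro closure_Riemann_map_sublevel_subset[where g = g]) auto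
  moreover have "inj_on f V" using f(2) by (metis inj_on_inverseI)
  then have "smoothly_bounded \<Omega>"
    unfolding \<Omega>_def using V(2,3) f(1) \<open>r > 0\<close> \<open>closure \<Omega> \<subseteq> V\<close> holomorphic_injective_imp_regular
    by (intro smoothly_bounded_modulus_sublevel bounded_subset[OF V(3)]) (auto simp: \<Omega>_def)
  moreover have "convex \<Omega>"
    unfolding \<Omega>_def by (rule Riemann_map_sublevel_convex[OF V(1) f(1) g(1) f(2) g(2)])
  moreover have "K \<subseteq> \<Omega>" using m(2) r(1) V(4) by (force simp: \<Omega>_def)
  ultimately show ?thesis using that V(5) by blast
qed

section \<open>Spectral constants\<close>

lemma le_SUP_closure:
  fixes h :: "'a::heine_borel \<Rightarrow> real"
  assumes "bounded \<Omega>" "continuous_on (closure \<Omega>) h" "z \<in> closure \<Omega>"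
  shows "h z \<le> (SUP w\<in>\<Omega>. h w)"
proof -
  have "compact (h ` closure \<Omega>)"
    using assms(1,2) by (intro compact_continuous_image) (simp_all add: compact_closure)
  then have "bdd_above (h ` \<Omega>)"
    using closure_subset by (meson bdd_above_mono bounded_imp_bdd_above compact_imp_bounded image_mono)
  then have "h ` \<Omega> \<subseteq> {..(SUP w\<in>\<Omega>. h w)}" by (auto intro: cSUP_upper)
  then have "h ` closure \<Omega> \<subseteq> {..(SUP w\<in>\<Omega>. h w)}" by (rule image_closure_subset[OF assms(2) closed_atMost])
  then show ?thesis using assms(3) by auto
qed

lemma SUP_le_SUP_closure:
  fixes h :: "'a::heine_borel \<Rightarrow> real"
  assumes "bounded \<Omega>" "continuous_on (closure \<Omega>) h" "X \<subseteq> closure \<Omega>" "X \<noteq> {}"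
  shows "(SUP z\<in>X. h z) \<le> (SUP w\<in>\<Omega>. h w)"
  using assms le_SUP_closure[OF assms(1,2)] by (intro cSUP_least) auto

lemma continuous_on_norm_rational:
  "\<forall>z\<in>S. poly q z \<noteq> 0 \<Longrightarrow> continuous_on S (\<lambda>z. cmod (poly p z / poly q z))"
  by (intro continuous_intros) auto

lemma smoothly_bounded_empty: "smoothly_bounded {}"
  by (simp add: smoothly_bounded_def embedded_smooth_submanifold_def)

text \<open>On a nontrivial space \<open>\<kappa> * Sup {}\<close> would bound the norm of every multiple of the
  identity, whatever the unspecified real \<open>Sup {}\<close> is.\<close>
lemma spectral_constant_empty_imp_trivial:
  fixes A :: "'a::complex_inner \<Rightarrow> 'a" and x :: 'a
  assumes "spectral_constant A {} \<kappa>"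
  shows "x = 0"
proof (rule ccontr)
  assume "x \<noteq> 0"
  define t where "t = \<bar>\<kappa> * Sup ({}::real set)\<bar> + 1"
  have "op_rat [:of_real t:] 1 A = (\<lambda>x. t *\<^sub>R x)"
    by (simp add: fun_eq_iff op_rat_const scaleR_scaleC)
  moreover have "onorm (op_rat [:of_real t:] 1 A) \<le> \<kappa> * (SUP z\<in>{}. cmod (poly [:of_real t:] z / poly 1 z))"
    using assms unfolding spectral_constant_def by simp
  ultimately have "onorm (\<lambda>x::'a. t *\<^sub>R x) \<le> \<kappa> * Sup {}" by simp
  moreover have "norm (t *\<^sub>R x) \<le> onorm (\<lambda>x::'a. t *\<^sub>R x) * norm x"
    by (rule onorm[OF bounded_linear_scaleR_right])
  then have "\<bar>t\<bar> \<le> onorm (\<lambda>x::'a. t *\<^sub>R x)" using \<open>x \<noteq> 0\<close> by simp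
  ultimately show False unfolding t_def by linarith
qed

lemma spectral_constant_closure_superset:
  fixes A :: "'a::complex_inner \<Rightarrow> 'a"
  assumes sc: "spectral_constant A X \<kappa>" and "bounded \<Omega>" "X \<subseteq> closure \<Omega>"
  shows "spectral_constant A \<Omega> \<kappa>"
proof (cases "\<Omega> = {}")
  case True
  then show ?thesis using sc assms(3) by simp
next
  case False
  show ?thesis
    unfolding spectral_constant_def
  proof (intro conjI allI impI)
    show "\<kappa> > 0" using sc by (simp add: spectral_constant_def)
    fix p q assume pq: "q \<noteq> 0 \<and> (\<forall>z\<in>closure \<Omega>. poly q z \<noteq> 0)"
    let ?h = "\<lambda>z. cmod (poly p z / poly q z)"
    have cont: "continuous_on (closure \<Omega>) ?h" using pq by (intro continuous_on_norm_rational) blast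
    show "onorm (op_rat p q A) \<le> \<kappa> * (SUP z\<in>\<Omega>. ?h z)"
    proof (cases "X = {}")
      case True
      then have "op_rat p q A = (\<lambda>x. 0)"
        using spectral_constant_empty_imp_trivial sc by blast
      moreover obtain z where "z \<in> \<Omega>" using False by blast
      then have "0 \<le> (SUP z\<in>\<Omega>. ?h z)"
        using le_SUP_closure[OF assms(2) cont] closure_subset norm_ge_zero order_trans by blast
      ultimately show ?thesis using \<open>\<kappa> > 0\<close> by (simp add: onorm_zero)
    next
      case False
      have "closure X \<subseteq> closure \<Omega>" using assms(3) by (metis closure_closure closure_mono)
      then have "onorm (op_rat p q A) \<le> \<kappa> * (SUP z\<in>X. ?h z)"
        using sc pq unfolding spectral_constant_def by blast
      also have "\<dots> \<le> \<kappa> * (SUP z\<in>\<Omega>. ?h z)"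
        using SUP_le_SUP_closure[OF assms(2) cont assms(3) False] \<open>\<kappa> > 0\<close> by simp
      finally show ?thesis .
    qed
  qed
qed

lemma spectral_constant_onorm_le:
  assumes "spectral_constant A \<Omega> \<kappa>" "\<Omega> \<noteq> {}" "q \<noteq> 0" "\<forall>z\<in>closure \<Omega>. poly q z \<noteq> 0"
    and "\<forall>z\<in>\<Omega>. cmod (poly p z / poly q z) \<le> B"
  shows "onorm (op_rat p q A) \<le> \<kappa> * B"
proof -
  have "onorm (op_rat p q A) \<le> \<kappa> * (SUP z\<in>\<Omega>. cmod (poly p z / poly q z))"
    using assms(1,3,4) unfolding spectral_constant_def by blast
  also have "\<dots> \<le> \<kappa> * B"
    using assms(1,2,5) by (intro mult_left_mono cSUP_least) (auto simp: spectral_constant_def)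
  finally show ?thesis .
qed

lemma onorm_op_rat_perturbation:
  fixes A :: "'a::complex_inner \<Rightarrow> 'a"
  assumes "bounded_op A" "q \<noteq> 0" "\<forall>z. poly q z = 0 \<longrightarrow> z \<notin> op_spectrum A"
  shows "onorm (op_rat p q A)
           \<le> onorm (op_rat (p + smult (of_real \<delta>) r) q A) + \<bar>\<delta>\<bar> * onorm (op_rat r q A)"
proof -
  have bl: "bounded_linear (op_rat s q A)" for s
    using bounded_op_op_rat[OF assms] by (simp add: bounded_op_def)
  let ?P = "p + smult (of_real \<delta>) r"
  have eq: "op_rat p q A = (\<lambda>x. op_rat ?P q A x + (- \<delta>) *\<^sub>R op_rat r q A x)"
    by (simp add: fun_eq_iff op_rat_add op_rat_smult scaleR_scaleC scaleC_minus_left)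
  have "onorm (op_rat p q A) \<le> onorm (op_rat ?P q A) + onorm (\<lambda>x. (- \<delta>) *\<^sub>R op_rat r q A x)"
    unfolding eq
    by (rule onorm_triangle[OF bl[of ?P] bounded_linear_compose[OF bounded_linear_scaleR_right bl[of r]]])
  also have "onorm (\<lambda>x. (- \<delta>) *\<^sub>R op_rat r q A x) = \<bar>\<delta>\<bar> * onorm (op_rat r q A)"
    using onorm_scaleR[OF bl[of r], of "- \<delta>"] by simp
  finally show ?thesis .
qed

text \<open>The witness is a power of \<open>z - c\<close> with \<open>q c \<noteq> 0\<close>.\<close>
lemma exists_poly_high_degree_coprime:
  fixes p q :: "complex poly"
  assumes "q \<noteq> 0"
  obtains r where "degree p < degree r" "degree q < degree r" "\<forall>z. poly q z = 0 \<longrightarrow> poly r z \<noteq> 0"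
proof -
  obtain c where c: "poly q c \<noteq> 0"
    using ex_new_if_finite[OF infinite_UNIV_char_0 poly_roots_finite[OF assms]] by blast
  define r where "r = [:-c, 1:] ^ (degree p + degree q + 1)"
  have "degree r = degree p + degree q + 1" unfolding r_def by (rule degree_linear_power)
  moreover have "poly r z \<noteq> 0" if "poly q z = 0" for z using that c by (auto simp: r_def)
  ultimately show ?thesis using that[of r] by simp
qed

lemma finite_perturbations_with_common_root:
  fixes p q r :: "complex poly"
  assumes "q \<noteq> 0" "\<forall>z. poly q z = 0 \<longrightarrow> poly r z \<noteq> 0"
  shows "finite {t::real. \<exists>z. poly q z = 0 \<and> poly (p + smult (of_real t) r) z = 0}"
proof -
  have "of_real t = - poly p z / poly r z"
    if "poly q z = 0" "poly (p + smult (of_real t) r) z = 0" for t z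
    using that assms(2) by (auto simp: field_simps eq_neg_iff_add_eq_0)
  then have "of_real ` {t::real. \<exists>z. poly q z = 0 \<and> poly (p + smult (of_real t) r) z = 0}
               \<subseteq> (\<lambda>z. - poly p z / poly r z) ` {z. poly q z = 0}"
    by blast
  from finite_subset[OF this finite_imageI[OF poly_roots_finite[OF assms(1)]]]
  show ?thesis by (rule finite_imageD) (simp add: inj_on_def)
qed

lemma onorm_op_rat_le_on_lemniscate:
  fixes A :: "'a::complex_inner \<Rightarrow> 'a"
  assumes "X \<noteq> {}" "op_spectrum A \<subseteq> closure X"
    and H: "\<forall>\<Omega>. smoothly_bounded \<Omega> \<and> op_spectrum A \<subseteq> \<Omega> \<and> X \<subseteq> closure \<Omega>
                 \<longrightarrow> spectral_constant A \<Omega> \<kappa>"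
    and "Q \<noteq> 0" "\<forall>z. poly Q z = 0 \<longrightarrow> poly P z \<noteq> 0" "degree Q < degree P"
    and "\<forall>z\<in>closure X. poly Q z \<noteq> 0 \<and> cmod (poly P z / poly Q z) \<le> a" "a < b"
  shows "onorm (op_rat P Q A) \<le> \<kappa> * b"
proof -
  obtain x where "x \<in> X" using assms(1) by blast
  then have "cmod (poly P x / poly Q x) \<le> a" using assms(7) closure_subset by blast
  then have "0 \<le> a" using norm_ge_zero order_trans by blast
  then obtain M where M: "a < M" "M < b"
    and sb: "smoothly_bounded {z. cmod (poly P z) < M * cmod (poly Q z)}"
    and cl: "closure {z. cmod (poly P z) < M * cmod (poly Q z)} \<subseteq> {z. poly Q z \<noteq> 0}"
    using lemniscate_smoothly_bounded[OF assms(5,4,6) _ assms(8)] by blast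
  define \<Omega> where "\<Omega> = {z. cmod (poly P z) < M * cmod (poly Q z)}"
  have "closure X \<subseteq> \<Omega>"
  proof
    fix z assume "z \<in> closure X"
    then have "cmod (poly Q z) > 0" "cmod (poly P z) / cmod (poly Q z) \<le> a"
      using assms(7) by (auto simp: norm_divide)
    then have "cmod (poly P z) \<le> a * cmod (poly Q z)" by (simp add: pos_divide_le_eq)
    also have "\<dots> < M * cmod (poly Q z)" using M(1) \<open>cmod (poly Q z) > 0\<close> by simp
    finally show "z \<in> \<Omega>" by (simp add: \<Omega>_def)
  qed
  moreover have "X \<subseteq> closure \<Omega>" using \<open>closure X \<subseteq> \<Omega>\<close> closure_subset by blast
  ultimately have "spectral_constant A \<Omega> \<kappa>"
    using H sb assms(2) by (simp add: \<Omega>_def)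
  moreover have "\<Omega> \<noteq> {}" using \<open>x \<in> X\<close> \<open>closure X \<subseteq> \<Omega>\<close> closure_subset by blast
  moreover have "\<forall>z\<in>closure \<Omega>. poly Q z \<noteq> 0" using cl by (auto simp: \<Omega>_def)
  moreover have "\<forall>z\<in>\<Omega>. cmod (poly P z / poly Q z) \<le> M"
    by (auto simp: \<Omega>_def norm_divide divide_le_eq)
  ultimately have "onorm (op_rat P Q A) \<le> \<kappa> * M"
    using assms(4) by (intro spectral_constant_onorm_le)
  also have "\<dots> \<le> \<kappa> * b"
    using M(2) \<open>spectral_constant A \<Omega> \<kappa>\<close> by (simp add: spectral_constant_def)
  finally show ?thesis .
qed

lemma spectral_constantI_approx:
  assumes "\<kappa> > 0"
    and "\<And>p q e. q \<noteq> 0 \<Longrightarrow> \<forall>z\<in>closure X. poly q z \<noteq> 0 \<Longrightarrow> e > 0 \<Longrightarrow>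
           onorm (op_rat p q A) \<le> \<kappa> * (SUP z\<in>X. cmod (poly p z / poly q z)) + e"
  shows "spectral_constant A X \<kappa>"
  using assms unfolding spectral_constant_def by (blast intro: field_le_epsilon)

lemma norm_perturbed_quotient_le_SUP:
  assumes "bounded X" "\<forall>z\<in>closure X. poly q z \<noteq> 0" "\<delta> \<ge> 0" "z \<in> closure X"
  shows "cmod (poly (p + smult (of_real \<delta>) r) z / poly q z)
           \<le> (SUP w\<in>X. cmod (poly p w / poly q w)) + \<delta> * (SUP w\<in>X. cmod (poly r w / poly q w))"
proof -
  have cont: "continuous_on (closure X) (\<lambda>z. cmod (poly s z / poly q z))" for s
    using assms(2) by (rule continuous_on_norm_rational)
  have "poly (p + smult (of_real \<delta>) r) z / poly q z
          = poly p z / poly q z + of_real \<delta> * (poly r z / poly q z)"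
    by (simp add: add_divide_distrib)
  then have "cmod (poly (p + smult (of_real \<delta>) r) z / poly q z)
               \<le> cmod (poly p z / poly q z) + cmod (of_real \<delta> * (poly r z / poly q z))"
    by (simp only: norm_triangle_ineq)
  also have "\<dots> = cmod (poly p z / poly q z) + \<delta> * cmod (poly r z / poly q z)"
    using assms(3) by (simp only: norm_mult norm_of_real abs_of_nonneg)
  also have "\<dots> \<le> (SUP w\<in>X. cmod (poly p w / poly q w)) + \<delta> * (SUP w\<in>X. cmod (poly r w / poly q w))"
    using assms(3,4) by (intro add_mono mult_left_mono le_SUP_closure[OF assms(1) cont])
  finally show ?thesis .
qed

text \<open>Perturb \<open>p\<close> to \<open>P = p + \<delta> r\<close>, which dominates \<open>q\<close> at infinity and shares no zero with
  it, so that its lemniscates are bounded; the price \<open>\<delta> \<parallel>r(A) q(A)\<^sup>-\<^sup>1\<parallel>\<close> is small.\<close>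
lemma onorm_op_rat_le_via_lemniscates:
  fixes A :: "'a::complex_inner \<Rightarrow> 'a"
  assumes A: "bounded_op A" and "bounded X" "X \<noteq> {}" "op_spectrum A \<subseteq> closure X" "\<kappa> > 0"
    and H: "\<forall>\<Omega>. smoothly_bounded \<Omega> \<and> op_spectrum A \<subseteq> \<Omega> \<and> X \<subseteq> closure \<Omega>
                 \<longrightarrow> spectral_constant A \<Omega> \<kappa>"
    and q: "q \<noteq> 0" "\<forall>z\<in>closure X. poly q z \<noteq> 0" and "e > 0"
  shows "onorm (op_rat p q A) \<le> \<kappa> * (SUP z\<in>X. cmod (poly p z / poly q z)) + e"
proof -
  have roots: "\<forall>z. poly q z = 0 \<longrightarrow> z \<notin> op_spectrum A" using assms(4) q(2) by blast
  define S where "S = (SUP z\<in>X. cmod (poly p z / poly q z))"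
  obtain r where r: "degree p < degree r" "degree q < degree r" "\<forall>z. poly q z = 0 \<longrightarrow> poly r z \<noteq> 0"
    using exists_poly_high_degree_coprime q(1) by blast
  define C where "C = (SUP z\<in>X. cmod (poly r z / poly q z))"
  define T where "T = onorm (op_rat r q A)"
  obtain x where "x \<in> X" using assms(3) by blast
  then have "cmod (poly r x / poly q x) \<le> C"
    unfolding C_def using le_SUP_closure[OF assms(2) continuous_on_norm_rational[OF q(2)]] closure_subset
    by blast
  then have "C \<ge> 0" using norm_ge_zero order_trans by blast
  have "T \<ge> 0"
    unfolding T_def using bounded_op_op_rat[OF A q(1) roots] by (simp add: bounded_op_def onorm_pos_le)
  define L where "L = \<kappa> * (C + 1) + T + 1"
  have "L > 0" using \<open>C \<ge> 0\<close> \<open>T \<ge> 0\<close> \<open>\<kappa> > 0\<close> by (simp add: L_def add_pos_nonneg)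
  have "finite {t. \<exists>z. poly q z = 0 \<and> poly (p + smult (of_real t) r) z = 0}"
    by (rule finite_perturbations_with_common_root[OF q(1) r(3)])
  moreover have "0 < e / L" using \<open>e > 0\<close> \<open>L > 0\<close> by simp
  ultimately obtain \<delta> where \<delta>: "0 < \<delta>" "\<delta> < e / L"
    "\<delta> \<notin> {t. \<exists>z. poly q z = 0 \<and> poly (p + smult (of_real t) r) z = 0}"
    by (rule Ioo_avoiding_finite)
  define P where "P = p + smult (of_real \<delta>) r"
  have "onorm (op_rat P q A) \<le> \<kappa> * (S + \<delta> * C + \<delta>)"
  proof (rule onorm_op_rat_le_on_lemniscate[OF assms(3,4) H q(1)])
    show "\<forall>z. poly q z = 0 \<longrightarrow> poly P z \<noteq> 0" using \<delta>(3) by (auto simp: P_def)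
    show "degree q < degree P" using \<delta>(1) r(1,2) by (simp add: P_def degree_add_eq_right)
    show "\<forall>z\<in>closure X. poly q z \<noteq> 0 \<and> cmod (poly P z / poly q z) \<le> S + \<delta> * C"
      unfolding P_def S_def C_def using norm_perturbed_quotient_le_SUP[OF assms(2) q(2)] \<delta>(1) q(2)
      by simp
    show "S + \<delta> * C < S + \<delta> * C + \<delta>" using \<delta>(1) by simp
  qed
  then have "onorm (op_rat p q A) \<le> \<kappa> * (S + \<delta> * C + \<delta>) + \<delta> * T"
    using onorm_op_rat_perturbation[OF A q(1) roots, of p \<delta> r] \<delta>(1) by (simp add: P_def T_def)
  also have "\<dots> = \<kappa> * S + \<delta> * (L - 1)" by (simp add: L_def algebra_simps)
  also have "\<dots> \<le> \<kappa> * S + e" using \<delta> \<open>L > 0\<close> by (simp add: field_simps)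
  finally show ?thesis unfolding S_def .
qed

lemma onorm_op_rat_le_via_convex_neighbourhoods:
  fixes A :: "'a::complex_inner \<Rightarrow> 'a"
  assumes "bounded X" "convex X" "X \<noteq> {}" "op_spectrum A \<subseteq> closure X" "\<kappa> > 0"
    and H: "\<forall>\<Omega>. convex \<Omega> \<and> smoothly_bounded \<Omega> \<and> op_spectrum A \<subseteq> \<Omega> \<and> X \<subseteq> closure \<Omega>
                 \<longrightarrow> spectral_constant A \<Omega> \<kappa>"
    and q: "q \<noteq> 0" "\<forall>z\<in>closure X. poly q z \<noteq> 0" and "e > 0"
  shows "onorm (op_rat p q A) \<le> \<kappa> * (SUP z\<in>X. cmod (poly p z / poly q z)) + e"
proof -
  define h where "h = (\<lambda>z. cmod (poly p z / poly q z))"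
  define S where "S = (SUP z\<in>X. h z)"
  define W where "W = {z. poly q z \<noteq> 0} \<inter> h -` {..<S + e / \<kappa>}"
  have "open W"
    unfolding W_def h_def
    by (intro continuous_open_preimage continuous_on_norm_rational open_Collect_neq continuous_intros)
      auto
  moreover have "closure X \<subseteq> W"
  proof
    fix z assume z: "z \<in> closure X"
    then have "h z \<le> S"
      unfolding S_def h_def by (rule le_SUP_closure[OF assms(1) continuous_on_norm_rational[OF q(2)]])
    moreover have "e / \<kappa> > 0" using \<open>e > 0\<close> \<open>\<kappa> > 0\<close> by simp
    ultimately show "z \<in> W" using q z by (simp add: W_def)
  qed
  ultimately obtain \<Omega> where \<Omega>: "convex \<Omega>" "smoothly_bounded \<Omega>" "closure X \<subseteq> \<Omega>" "closure \<Omega> \<subseteq> W"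
    using convex_smoothly_bounded_neighbourhood[of "closure X" W] assms(1-3)
    by (auto simp: compact_closure convex_closure)
  then have "spectral_constant A \<Omega> \<kappa>"
    using H assms(4) closure_subset by (metis subset_trans)
  moreover have "\<Omega> \<noteq> {}" using assms(3) \<Omega>(3) closure_subset by blast
  moreover have "\<forall>z\<in>closure \<Omega>. poly q z \<noteq> 0" using \<Omega>(4) by (auto simp: W_def)
  moreover have "\<forall>z\<in>\<Omega>. h z \<le> S + e / \<kappa>"
    using \<Omega>(4) closure_subset by (fastforce simp: W_def)
  ultimately have "onorm (op_rat p q A) \<le> \<kappa> * (S + e / \<kappa>)"
    using q(1) unfolding h_def by (intro spectral_constant_onorm_le) auto
  also have "\<dots> = \<kappa> * S + e" using \<open>\<kappa> > 0\<close> by (simp add: distrib_left)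
  finally show ?thesis unfolding S_def h_def .
qed

lemma spectral_constant_of_smoothly_bounded_neighbourhoods:
  fixes A :: "'a::complex_inner \<Rightarrow> 'a"
  assumes "bounded_op A" "bounded X" "op_spectrum A \<subseteq> closure X" "\<kappa> > 0"
    and H: "\<forall>\<Omega>. smoothly_bounded \<Omega> \<and> op_spectrum A \<subseteq> \<Omega> \<and> X \<subseteq> closure \<Omega>
                 \<longrightarrow> spectral_constant A \<Omega> \<kappa>"
  shows "spectral_constant A X \<kappa>"
proof (cases "X = {}")
  case True
  then show ?thesis using H assms(3) smoothly_bounded_empty by auto
next
  case False
  then show ?thesis
    using onorm_op_rat_le_via_lemniscates[OF assms(1,2) False assms(3,4) H]
    by (intro spectral_constantI_approx[OF assms(4)])
qed

lemma spectral_constant_of_convex_neighbourhoods: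
  fixes A :: "'a::complex_inner \<Rightarrow> 'a"
  assumes "bounded X" "convex X" "op_spectrum A \<subseteq> closure X" "\<kappa> > 0"
    and H: "\<forall>\<Omega>. convex \<Omega> \<and> smoothly_bounded \<Omega> \<and> op_spectrum A \<subseteq> \<Omega> \<and> X \<subseteq> closure \<Omega>
                 \<longrightarrow> spectral_constant A \<Omega> \<kappa>"
  shows "spectral_constant A X \<kappa>"
proof (cases "X = {}")
  case True
  then show ?thesis using H assms(3) smoothly_bounded_empty by auto
next
  case False
  then show ?thesis
    using onorm_op_rat_le_via_convex_neighbourhoods[OF assms(1,2) False assms(3,4) H]
    by (intro spectral_constantI_approx[OF assms(4)])
qed

theorem propositionA2:
  fixes A :: "'a::chilbert_space \<Rightarrow> 'a" and X :: "complex set" and \<kappa> :: real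
  assumes "bounded_op A"
    and "bounded X"
    and "op_spectrum A \<subseteq> closure X"
    and "\<kappa> > 0"
  shows "(spectral_constant A X \<kappa> \<longleftrightarrow>
            (\<forall>\<Omega>. smoothly_bounded \<Omega> \<and> op_spectrum A \<subseteq> \<Omega> \<and> X \<subseteq> closure \<Omega>
                  \<longrightarrow> spectral_constant A \<Omega> \<kappa>))
       \<and> (convex X \<longrightarrow>
            (spectral_constant A X \<kappa> \<longleftrightarrow>
              (\<forall>\<Omega>. convex \<Omega> \<and> smoothly_bounded \<Omega> \<and> op_spectrum A \<subseteq> \<Omega> \<and> X \<subseteq> closure \<Omega>
                    \<longrightarrow> spectral_constant A \<Omega> \<kappa>)))"
proof -
  have to_neighbourhood: "spectral_constant A \<Omega> \<kappa>"
    if "spectral_constant A X \<kappa>" "smoothly_bounded \<Omega>" "X \<subseteq> closure \<Omega>" for \<Omega>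
    using spectral_constant_closure_superset that by (auto simp: smoothly_bounded_def)
  show ?thesis
    using to_neighbourhood spectral_constant_of_smoothly_bounded_neighbourhoods[OF assms]
      spectral_constant_of_convex_neighbourhoods[OF assms(2) _ assms(3,4)]
    by blast
qed
end
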